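(* Fix $k,\gamma>0$ and let $g_\sigma(x)=\Gamma(k/\gamma)^{-1}\sigma^{-k}\gamma x^{k-1}e^{-(x/\sigma)^\gamma}$, $x>0$, be the generalized gamma scale family, with natural parameter $\eta=\sigma^{-\gamma}$. Let $\eta_{\mathrm{train}}>0$ and let $\eta_{\mathrm{test}}>0$ be a random variable that is not almost surely constant, such that $\log\eta_{\mathrm{test}}$ has a distribution symmetric about $\log\eta_{\mathrm{train}}$ and $\mathbb{E}[1/\eta_{\mathrm{test}}]<\infty$. Let $Y$ have conditional density $g_{\sigma_{\mathrm{test}}}$ given $\eta_{\mathrm{test}}$, where $\sigma_{\mathrm{test}}=\eta_{\mathrm{test}}^{-1/\gamma}$. Then the scale $\sigma^*>0$ minimizing the expected logarithmic loss $\mathbb{E}[-\log g_\sigma(Y)]$ over $\sigma>0$ exists, is unique, is given by $(\sigma^* )^{\gamma}=\mathbb{E}[1/\eta_{\mathrm{test}}]$, and satisfies $\sigma^*>\sigma_{\mathrm{train}}:=\eta_{\mathrm{train}}^{-1/\gamma}$.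
   Context: Logarithmic loss of forecast density $f$ at outcome $y$: $-\log f(y)$. *)

theory Defs
  imports "HOL-Probability.Probability"
begin

definition gengamma_density :: "real \<Rightarrow> real \<Rightarrow> real \<Rightarrow> real \<Rightarrow> real" where
  "gengamma_density k \<gamma> \<sigma> x =
     (if x > 0 then \<gamma> * x powr (k - 1) * exp (- ((x / \<sigma>) powr \<gamma>)) / (Gamma (k / \<gamma>) * \<sigma> powr k)
      else 0)"

definition scale_of_nat :: "real \<Rightarrow> real \<Rightarrow> real" where
  "scale_of_nat \<gamma> \<eta> = \<eta> powr (- 1 / \<gamma>)"

definition exp_log_loss :: "'a measure \<Rightarrow> ('a \<Rightarrow> real) \<Rightarrow> real \<Rightarrow> real \<Rightarrow> real \<Rightarrow> real" where
  "exp_log_loss M Y k \<gamma> \<sigma> = (\<integral>\<omega>. - ln (gengamma_density k \<gamma> \<sigma> (Y \<omega>)) \<partial>M)"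

end

theory Submission
  imports Defs "HOL-Real_Asymp.Real_Asymp"
begin

text \<open>
  For \<open>y > 0\<close>, \<open>- ln (g\<^sub>\<sigma> y) = k ln \<sigma> + (y / \<sigma>)\<^sup>\<gamma> + (terms free of \<sigma>)\<close>, so the expected
  loss is \<open>C + k ln \<sigma> + E[Y\<^sup>\<gamma>] / \<sigma>\<^sup>\<gamma>\<close>, which is uniquely minimized at
  \<open>\<sigma>\<^sup>\<gamma> = (\<gamma> / k) E[Y\<^sup>\<gamma>]\<close>. The substitution \<open>y = \<sigma> u\<^sup>1\<^sup>/\<^sup>\<gamma>\<close> turns the moments of
  \<open>g\<^sub>\<sigma>\<close> into Gamma integrals, so \<open>E[Y\<^sup>\<gamma> | \<eta>] = (k / \<gamma>) / \<eta>\<close> and the minimizer satisfies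
  \<open>\<sigma>\<^sup>\<gamma> = E[1 / \<eta>]\<close>. For \<open>X = ln \<eta>\<^sub>t\<^sub>r\<^sub>a\<^sub>i\<^sub>n - ln \<eta>\<close>, symmetric and not almost surely zero,
  \<open>\<eta>\<^sub>t\<^sub>r\<^sub>a\<^sub>i\<^sub>n E[1 / \<eta>] = E[exp X] = E[cosh X] > 1\<close>, which is \<open>\<sigma>\<^sup>\<gamma> > \<sigma>\<^sub>t\<^sub>r\<^sub>a\<^sub>i\<^sub>n\<^sup>\<gamma>\<close>.
  Integrability of the loss needs \<open>E |ln Y| < \<infinity>\<close>; it follows from finiteness of
  \<open>E[Y\<^sup>\<plusminus>\<^sup>\<epsilon>]\<close>, i.e. of \<open>E[\<eta>\<^sup>\<plusminus>\<^sup>t]\<close>: the negative moment is at most \<open>1 + E[1 / \<eta>]\<close>, and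
  log-symmetry makes the positive one a multiple of it.
\<close>

lemma abs_ln_le_powr:
  fixes y e :: real
  assumes "y > 0" "e > 0"
  shows "\<bar>ln y\<bar> \<le> (y powr e + y powr (- e)) / e"
proof -
  have "e * ln y \<le> y powr e"
    using ln_le_minus_one[of "y powr e"] assms by (simp add: ln_powr)
  moreover have "- e * ln y \<le> y powr (- e)"
    using ln_le_minus_one[of "y powr (- e)"] assms by (simp add: ln_powr)
  ultimately have "e * \<bar>ln y\<bar> \<le> y powr e + y powr (- e)"
    by (cases "ln y \<ge> 0") (auto intro: add_increasing2 add_increasing)
  then show ?thesis
    using assms by (simp add: field_simps)
qed

lemma powr_neg_le_one_plus_inverse:
  fixes x t :: real
  assumes "x > 0" "0 \<le> t" "t \<le> 1"
  shows "x powr (- t) \<le> 1 + 1 / x"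
proof (cases "x \<ge> 1")
  case True
  then have "x powr (- t) \<le> 1"
    using assms by (simp add: powr_minus_divide ge_one_powr_ge_zero)
  then show ?thesis
    using assms by (smt (verit) divide_pos_pos)
next
  case False
  then have "x powr (- t) \<le> x powr (- 1)"
    using assms by (intro powr_mono') auto
  then show ?thesis
    using assms by (simp add: powr_minus_divide)
qed

lemma ln_plus_divide_strict_min:
  fixes q u :: real
  assumes "q > 0" "u > 0" "u \<noteq> q"
  shows "ln q + 1 < ln u + q / u"
proof -
  have "q / u > 0" "q / u \<noteq> 1"
    using assms by auto
  then have "ln (q / u) < q / u - 1"
    using ln_le_minus_one[of "q / u"] ln_eq_minus_one[of "q / u"] by fastforce
  then show ?thesis
    using assms by (simp add: ln_div)
qed

section \<open>The generalized gamma density\<close>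

lemma gengamma_density_nonneg:
  assumes "k > 0" "\<gamma> > 0" "\<sigma> > 0"
  shows "gengamma_density k \<gamma> \<sigma> y \<ge> 0"
  using assms Gamma_real_pos[of "k / \<gamma>"] by (auto simp: gengamma_density_def)

lemma gengamma_density_nonpos [simp]: "y \<le> 0 \<Longrightarrow> gengamma_density k \<gamma> \<sigma> y = 0"
  by (simp add: gengamma_density_def)

lemma measurable_gengamma_density [measurable]:
  assumes [measurable]: "f \<in> borel_measurable M" "g \<in> borel_measurable M"
  shows "(\<lambda>x. gengamma_density k \<gamma> (f x) (g x)) \<in> borel_measurable M"
  unfolding gengamma_density_def by measurable

lemma isCont_gengamma_density:
  assumes "y > 0" "k > 0" "\<gamma> > 0" "\<sigma> > 0"
  shows "isCont (gengamma_density k \<gamma> \<sigma>) y"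
proof -
  have ev: "\<forall>\<^sub>F x in nhds y. gengamma_density k \<gamma> \<sigma> x =
      \<gamma> * x powr (k - 1) * exp (- ((x / \<sigma>) powr \<gamma>)) / (Gamma (k / \<gamma>) * \<sigma> powr k)"
    using eventually_nhds_in_open[of "{0<..}" y] assms
    by (auto elim!: eventually_mono simp: gengamma_density_def)
  have "Gamma (k / \<gamma>) \<noteq> 0"
    using assms Gamma_real_pos[of "k / \<gamma>"] by force
  then have "isCont (\<lambda>x. \<gamma> * x powr (k - 1) * exp (- ((x / \<sigma>) powr \<gamma>)) / (Gamma (k / \<gamma>) * \<sigma> powr k)) y"
    using assms by (auto intro!: continuous_intros)
  then show ?thesis
    using isCont_cong[OF ev] by simp
qed

lemma neg_ln_gengamma_density:
  fixes k \<gamma> \<sigma> y :: real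
  assumes k: "k > 0" and \<gamma>: "\<gamma> > 0" and \<sigma>: "\<sigma> > 0" and y: "y > 0"
  shows "- ln (gengamma_density k \<gamma> \<sigma> y)
       = ln (Gamma (k / \<gamma>)) - ln \<gamma> + k * ln \<sigma> - (k - 1) * ln y + y powr \<gamma> / \<sigma> powr \<gamma>"
proof -
  have G: "Gamma (k / \<gamma>) > 0"
    using k \<gamma> by (intro Gamma_real_pos) simp
  have "ln (gengamma_density k \<gamma> \<sigma> y)
      = ln (\<gamma> * y powr (k - 1) * exp (- ((y / \<sigma>) powr \<gamma>))) - ln (Gamma (k / \<gamma>) * \<sigma> powr k)"
    unfolding gengamma_density_def using y \<gamma> \<sigma> G by (simp add: ln_div)
  also have "\<dots> = ln \<gamma> + (k - 1) * ln y - y powr \<gamma> / \<sigma> powr \<gamma> - (ln (Gamma (k / \<gamma>)) + k * ln \<sigma>)"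
    using y \<gamma> \<sigma> G by (simp add: ln_mult ln_powr powr_divide)
  finally show ?thesis
    by simp
qed

lemma Gamma_integrand_Ioi:
  fixes s :: real
  assumes "s > 0"
  shows "set_integrable lborel {0<..} (\<lambda>u. u powr (s - 1) / exp u)"
    and "(LINT u:{0<..}|lborel. u powr (s - 1) / exp u) = Gamma s"
proof -
  have nn: "(\<integral>\<^sup>+u. ennreal (indicator {0<..} u * (u powr (s - 1) / exp u)) \<partial>lborel) = Gamma s"
    using Gamma_conv_nn_integral_real[OF assms]
    by (simp add: indicator_def cong: nn_integral_cong_simp)
      (intro nn_integral_cong_AE AE_I[where N = "{0}"], auto)
  have int: "integrable lborel (\<lambda>u. indicator {0<..} u * (u powr (s - 1) / exp u))"
  proof (rule integrableI_nonneg)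
    show "(\<integral>\<^sup>+u. ennreal (indicator {0<..} u * (u powr (s - 1) / exp u)) \<partial>lborel) < \<infinity>"
      unfolding nn by simp
  qed auto
  then show "set_integrable lborel {0<..} (\<lambda>u. u powr (s - 1) / exp u)"
    by (simp add: set_integrable_def)
  have "ennreal (LINT u:{0<..}|lborel. u powr (s - 1) / exp u) = Gamma s"
    unfolding set_lebesgue_integral_def using nn nn_integral_eq_integral[OF int] by simp
  then show "(LINT u:{0<..}|lborel. u powr (s - 1) / exp u) = Gamma s"
    using Gamma_real_pos[OF assms] by (subst (asm) ennreal_inj)
      (auto simp: set_lebesgue_integral_def intro!: integral_nonneg_AE)
qed

lemma set_integral_Ioi_powr_substitution:
  fixes f :: "real \<Rightarrow> real" and \<gamma> \<sigma> :: real
  defines "g \<equiv> \<lambda>u. \<sigma> * u powr (1 / \<gamma>)" and "g' \<equiv> \<lambda>u. \<sigma> / \<gamma> * u powr (1 / \<gamma> - 1)"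
  assumes \<gamma>: "\<gamma> > 0" and \<sigma>: "\<sigma> > 0"
    and cont: "\<And>y. y > 0 \<Longrightarrow> isCont f y" and nonneg: "\<And>y. y > 0 \<Longrightarrow> f y \<ge> 0"
    and int: "set_integrable lborel {0<..} (\<lambda>u. f (g u) * g' u)"
  shows "set_integrable lborel {0<..} f"
    and "(LINT y:{0<..}|lborel. f y) = (LINT u:{0<..}|lborel. f (g u) * g' u)"
proof -
  have pos: "g u > 0" if "u > 0" for u
    using that \<sigma> by (simp add: g_def)
  have "((\<lambda>u. \<sigma> * u powr (1 / \<gamma>)) \<longlongrightarrow> 0) (at_right 0)"
    using \<gamma> \<sigma> by real_asymp
  then have lim0: "((ereal \<circ> g \<circ> real_of_ereal) \<longlongrightarrow> 0) (at_right 0)"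
    by (simp add: g_def zero_ereal_def ereal_tendsto_simps1 ereal_tendsto_simps2)
  have "filterlim (\<lambda>u. \<sigma> * u powr (1 / \<gamma>)) at_top at_top"
    using \<gamma> \<sigma> by real_asymp
  then have lim_inf: "((ereal \<circ> g \<circ> real_of_ereal) \<longlongrightarrow> \<infinity>) (at_left \<infinity>)"
    by (simp add: g_def ereal_tendsto_simps1 ereal_tendsto_simps2)
  have deriv: "(g has_real_derivative g' u) (at u)" if "u > 0" for u
    using that \<gamma> unfolding g_def g'_def
    by (auto intro!: derivative_eq_intros simp: powr_diff field_simps)
  have on_einterval: "u > 0" if "0 < ereal u" for u
    using that by (simp add: zero_ereal_def)
  note substitution = interval_integral_substitution_nonneg[where g = g and g' = g' and f = f,
      of 0 \<infinity> 0 \<infinity>]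
  have hyps: "(0::ereal) < \<infinity>"
    "\<And>u. 0 < ereal u \<Longrightarrow> (g has_real_derivative g' u) (at u)"
    "\<And>u. 0 < ereal u \<Longrightarrow> isCont f (g u)"
    "\<And>u. 0 < ereal u \<Longrightarrow> isCont g' u"
    "\<And>u. 0 < ereal u \<Longrightarrow> 0 \<le> f (g u)"
    "\<And>u. 0 \<le> g' u"
    "set_integrable lborel (einterval 0 \<infinity>) (\<lambda>u. f (g u) * g' u)"
    subgoal by simp
    subgoal by (rule deriv[OF on_einterval])
    subgoal by (rule cont[OF pos[OF on_einterval]])
    subgoal for u using on_einterval[of u] \<gamma> by (auto simp: g'_def intro!: continuous_intros)
    subgoal by (rule nonneg[OF pos[OF on_einterval]])
    subgoal using \<gamma> \<sigma> by (simp add: g'_def)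
    subgoal using int by (simp add: zero_ereal_def)
    done
  note substituted = substitution[OF hyps(1-6) lim0 lim_inf hyps(7)]
  show "set_integrable lborel {0<..} f"
    using substituted(1) by (simp add: zero_ereal_def)
  show "(LINT y:{0<..}|lborel. f y) = (LINT u:{0<..}|lborel. f (g u) * g' u)"
    using substituted(2) by (simp add: interval_lebesgue_integral_0_infty)
qed

lemma gengamma_density_powr_substitution:
  fixes k \<gamma> \<sigma> p u :: real
  assumes k: "k > 0" and \<gamma>: "\<gamma> > 0" and \<sigma>: "\<sigma> > 0" and u: "u > 0"
  shows "(\<sigma> * u powr (1 / \<gamma>)) powr p * gengamma_density k \<gamma> \<sigma> (\<sigma> * u powr (1 / \<gamma>))
           * (\<sigma> / \<gamma> * u powr (1 / \<gamma> - 1))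
       = \<sigma> powr p / Gamma (k / \<gamma>) * (u powr ((k + p) / \<gamma> - 1) / exp u)"
proof -
  have pos: "\<sigma> * u powr (1 / \<gamma>) > 0"
    using \<sigma> u by simp
  have scaled: "((\<sigma> * u powr (1 / \<gamma>)) / \<sigma>) powr \<gamma> = u"
    using \<sigma> u \<gamma> by (simp add: powr_powr)
  have powr_p: "(\<sigma> * u powr (1 / \<gamma>)) powr p = \<sigma> powr p * u powr (p / \<gamma>)"
    using \<sigma> u by (simp add: powr_mult powr_powr)
  have powr_k: "(\<sigma> * u powr (1 / \<gamma>)) powr (k - 1) = \<sigma> powr (k - 1) * u powr ((k - 1) / \<gamma>)"
    using \<sigma> u by (simp add: powr_mult powr_powr)
  have u_powrs: "u powr (p / \<gamma>) * u powr ((k - 1) / \<gamma>) * u powr (1 / \<gamma> - 1) = u powr ((k + p) / \<gamma> - 1)"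
    using u \<gamma> by (simp add: powr_add[symmetric] add_divide_distrib diff_divide_distrib algebra_simps)
  have \<sigma>_powrs: "\<sigma> powr (k - 1) * \<sigma> = \<sigma> powr k"
    using \<sigma> by (simp add: powr_add[symmetric] powr_diff)
  have "Gamma (k / \<gamma>) > 0"
    using k \<gamma> by (intro Gamma_real_pos) simp
  then show ?thesis
    unfolding gengamma_density_def using pos \<sigma> \<gamma> u_powrs[symmetric] \<sigma>_powrs[symmetric]
    by (simp only: if_True scaled powr_p powr_k exp_minus) (simp add: field_simps)
qed

lemma set_integral_powr_gengamma_density:
  fixes k \<gamma> \<sigma> p :: real
  assumes k: "k > 0" and \<gamma>: "\<gamma> > 0" and \<sigma>: "\<sigma> > 0" and kp: "k + p > 0"
  shows "set_integrable lborel {0<..} (\<lambda>y. y powr p * gengamma_density k \<gamma> \<sigma> y)"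
    and "(LINT y:{0<..}|lborel. y powr p * gengamma_density k \<gamma> \<sigma> y)
           = \<sigma> powr p * Gamma ((k + p) / \<gamma>) / Gamma (k / \<gamma>)"
proof -
  define f where "f y = y powr p * gengamma_density k \<gamma> \<sigma> y" for y
  define C where "C = \<sigma> powr p / Gamma (k / \<gamma>)"
  define h where "h u = C * (u powr ((k + p) / \<gamma> - 1) / exp u)" for u
  have s: "(k + p) / \<gamma> > 0"
    using kp \<gamma> by simp
  have subst_eq: "f (\<sigma> * u powr (1 / \<gamma>)) * (\<sigma> / \<gamma> * u powr (1 / \<gamma> - 1)) = h u" if "u > 0" for u
    unfolding f_def h_def C_def using gengamma_density_powr_substitution[OF k \<gamma> \<sigma> that] by simp
  have h_int: "set_integrable lborel {0<..} h"
    unfolding h_def by (intro set_integrable_mult_right Gamma_integrand_Ioi(1)[OF s])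
  have "set_integrable lborel {0<..} (\<lambda>u. f (\<sigma> * u powr (1 / \<gamma>)) * (\<sigma> / \<gamma> * u powr (1 / \<gamma> - 1)))
      \<longleftrightarrow> set_integrable lborel {0<..} h"
    by (intro set_integrable_cong refl subst_eq) simp
  with h_int have "set_integrable lborel {0<..}
      (\<lambda>u. f (\<sigma> * u powr (1 / \<gamma>)) * (\<sigma> / \<gamma> * u powr (1 / \<gamma> - 1)))"
    by simp
  note substitution = set_integral_Ioi_powr_substitution[OF \<gamma> \<sigma> _ _ this]
  have cont: "isCont f y" if "y > 0" for y
    unfolding f_def using that k \<gamma> \<sigma>
    by (intro continuous_intros isCont_gengamma_density) auto
  have nonneg: "f y \<ge> 0" for y
    unfolding f_def using gengamma_density_nonneg[OF k \<gamma> \<sigma>] by simp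
  show "set_integrable lborel {0<..} (\<lambda>y. y powr p * gengamma_density k \<gamma> \<sigma> y)"
    using substitution(1)[OF cont nonneg] by (simp add: f_def[abs_def])
  have "(LINT y:{0<..}|lborel. f y)
      = (LINT u:{0<..}|lborel. f (\<sigma> * u powr (1 / \<gamma>)) * (\<sigma> / \<gamma> * u powr (1 / \<gamma> - 1)))"
    by (rule substitution(2)[OF cont nonneg])
  also have "\<dots> = (LINT u:{0<..}|lborel. h u)"
    by (rule set_lebesgue_integral_cong) (simp, intro allI impI subst_eq, simp)
  also have "\<dots> = C * Gamma ((k + p) / \<gamma>)"
    unfolding h_def using Gamma_integrand_Ioi[OF s] by (simp only: set_integral_mult_right)
  finally show "(LINT y:{0<..}|lborel. y powr p * gengamma_density k \<gamma> \<sigma> y)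
      = \<sigma> powr p * Gamma ((k + p) / \<gamma>) / Gamma (k / \<gamma>)"
    by (simp add: f_def C_def)
qed

lemma nn_integral_gengamma_density_powr:
  fixes k \<gamma> \<sigma> p :: real
  assumes k: "k > 0" and \<gamma>: "\<gamma> > 0" and \<sigma>: "\<sigma> > 0" and kp: "k + p > 0"
  shows "(\<integral>\<^sup>+y. ennreal (gengamma_density k \<gamma> \<sigma> y) * ennreal (y powr p) \<partial>lborel)
       = ennreal (\<sigma> powr p * Gamma ((k + p) / \<gamma>) / Gamma (k / \<gamma>))"
proof -
  let ?f = "\<lambda>y. y powr p * gengamma_density k \<gamma> \<sigma> y"
  note nonneg = gengamma_density_nonneg[OF k \<gamma> \<sigma>]
  have "(\<integral>\<^sup>+y. ennreal (gengamma_density k \<gamma> \<sigma> y) * ennreal (y powr p) \<partial>lborel)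
      = (\<integral>\<^sup>+y. ennreal (indicator {0<..} y * ?f y) \<partial>lborel)"
    using nonneg by (intro nn_integral_cong) (auto simp: indicator_def ennreal_mult'' mult.commute)
  also have "\<dots> = ennreal (LINT y:{0<..}|lborel. ?f y)"
  proof -
    have "integrable lborel (\<lambda>y. indicator {0<..} y * ?f y)"
      using set_integral_powr_gengamma_density(1)[OF assms] by (simp add: set_integrable_def)
    from nn_integral_eq_integral[OF this] show ?thesis
      using nonneg by (simp add: set_lebesgue_integral_def)
  qed
  finally show ?thesis
    by (simp only: set_integral_powr_gengamma_density(2)[OF assms])
qed

lemma nn_integral_gengamma_density:
  assumes k: "k > 0" and \<gamma>: "\<gamma> > 0" and \<sigma>: "\<sigma> > 0"
  shows "(\<integral>\<^sup>+y. ennreal (gengamma_density k \<gamma> \<sigma> y) \<partial>lborel) = 1"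
proof -
  have "Gamma (k / \<gamma>) > 0"
    using k \<gamma> by (intro Gamma_real_pos) simp
  moreover have "(\<integral>\<^sup>+y. ennreal (gengamma_density k \<gamma> \<sigma> y) \<partial>lborel)
      = (\<integral>\<^sup>+y. ennreal (gengamma_density k \<gamma> \<sigma> y) * ennreal (y powr 0) \<partial>lborel)"
    by (intro nn_integral_cong) (auto simp: gengamma_density_def)
  ultimately show ?thesis
    using nn_integral_gengamma_density_powr[OF k \<gamma> \<sigma>, of 0] k \<sigma> by simp
qed

section \<open>Mixtures of densities\<close>

locale density_mixture = prob_space M for M :: "'a measure" +
  fixes Y :: "'a \<Rightarrow> real" and f :: "'a \<Rightarrow> real \<Rightarrow> real"
  assumes measurable_Y [measurable]: "Y \<in> borel_measurable M"
    and measurable_f [measurable]: "(\<lambda>(\<omega>, y). f \<omega> y) \<in> borel_measurable (M \<Otimes>\<^sub>M lborel)"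
    and f_nonneg: "\<omega> \<in> space M \<Longrightarrow> f \<omega> y \<ge> 0"
    and f_normalized: "\<omega> \<in> space M \<Longrightarrow> (\<integral>\<^sup>+y. f \<omega> y \<partial>lborel) = 1"
    and law_Y: "B \<in> sets borel \<Longrightarrow> prob (Y -` B \<inter> space M) = (\<integral>\<omega>. (LINT y:B|lborel. f \<omega> y) \<partial>M)"
begin

lemma measurable_f_swap [measurable]: "(\<lambda>(y, \<omega>). f \<omega> y) \<in> borel_measurable (lborel \<Otimes>\<^sub>M M)"
  using measurable_compose[OF measurable_pair_swap' measurable_f] by (simp add: case_prod_beta')

lemma pair_sigma_finite_lborel: "pair_sigma_finite M lborel"
  by (intro pair_sigma_finite.intro sigma_finite_measure_axioms lborel.sigma_finite_measure_axioms)

lemma set_integral_f: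
  assumes \<omega>: "\<omega> \<in> space M" and B: "B \<in> sets borel"
  shows "(\<integral>\<^sup>+y. ennreal (f \<omega> y * indicator B y) \<partial>lborel) = ennreal (LINT y:B|lborel. f \<omega> y)"
    and "0 \<le> (LINT y:B|lborel. f \<omega> y)" "(LINT y:B|lborel. f \<omega> y) \<le> 1"
proof -
  have "(\<lambda>y. f \<omega> y) \<in> borel_measurable lborel"
    using \<omega> by measurable
  then have "integrable lborel (f \<omega>)"
    using \<omega> f_nonneg f_normalized by (intro integrableI_nonneg) auto
  then have int: "integrable lborel (\<lambda>y. f \<omega> y * indicator B y)"
    using B by (intro integrable_real_mult_indicator) auto
  show eq: "(\<integral>\<^sup>+y. ennreal (f \<omega> y * indicator B y) \<partial>lborel) = ennreal (LINT y:B|lborel. f \<omega> y)"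
    using nn_integral_eq_integral[OF int] \<omega> f_nonneg
    by (simp add: set_lebesgue_integral_def mult.commute)
  show "0 \<le> (LINT y:B|lborel. f \<omega> y)"
    using \<omega> f_nonneg by (auto simp: set_lebesgue_integral_def intro!: integral_nonneg_AE)
  have "(\<integral>\<^sup>+y. ennreal (f \<omega> y * indicator B y) \<partial>lborel) \<le> (\<integral>\<^sup>+y. f \<omega> y \<partial>lborel)"
    by (intro nn_integral_mono) (auto simp: indicator_def)
  then show "(LINT y:B|lborel. f \<omega> y) \<le> 1"
    using \<omega> f_normalized by (simp add: eq)
qed

lemma distr_Y_eq_density: "distr M lborel Y = density lborel (\<lambda>y. \<integral>\<^sup>+\<omega>. f \<omega> y \<partial>M)"
proof (rule measure_eqI)
  fix B assume "B \<in> sets (distr M lborel Y)"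
  then have B [measurable]: "B \<in> sets borel"
    by simp
  have "emeasure (distr M lborel Y) B = ennreal (\<integral>\<omega>. (LINT y:B|lborel. f \<omega> y) \<partial>M)"
    by (simp add: emeasure_distr emeasure_eq_measure law_Y)
  also have "\<dots> = (\<integral>\<^sup>+\<omega>. ennreal (LINT y:B|lborel. f \<omega> y) \<partial>M)"
  proof (rule nn_integral_eq_integral[symmetric])
    show "integrable M (\<lambda>\<omega>. LINT y:B|lborel. f \<omega> y)"
      using set_integral_f[OF _ B]
      by (intro integrable_const_bound[where B = 1]) (auto simp: set_lebesgue_integral_def)
  qed (use set_integral_f[OF _ B] in auto)
  also have "\<dots> = (\<integral>\<^sup>+\<omega>. (\<integral>\<^sup>+y. ennreal (f \<omega> y * indicator B y) \<partial>lborel) \<partial>M)"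
    by (intro nn_integral_cong) (simp add: set_integral_f(1)[OF _ B])
  also have "\<dots> = (\<integral>\<^sup>+y. (\<integral>\<^sup>+\<omega>. ennreal (f \<omega> y * indicator B y) \<partial>M) \<partial>lborel)"
    by (rule pair_sigma_finite.Fubini'[OF pair_sigma_finite_lborel, symmetric]) measurable
  also have "\<dots> = (\<integral>\<^sup>+y. (\<integral>\<^sup>+\<omega>. f \<omega> y \<partial>M) * indicator B y \<partial>lborel)"
    by (intro nn_integral_cong) (auto simp: indicator_def)
  also have "\<dots> = emeasure (density lborel (\<lambda>y. \<integral>\<^sup>+\<omega>. f \<omega> y \<partial>M)) B"
    by (simp add: emeasure_density)
  finally show "emeasure (distr M lborel Y) B = emeasure (density lborel (\<lambda>y. \<integral>\<^sup>+\<omega>. f \<omega> y \<partial>M)) B" .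
qed simp

lemma nn_integral_mixture:
  fixes h :: "real \<Rightarrow> ennreal"
  assumes [measurable]: "h \<in> borel_measurable borel"
  shows "(\<integral>\<^sup>+\<omega>. h (Y \<omega>) \<partial>M) = (\<integral>\<^sup>+\<omega>. (\<integral>\<^sup>+y. f \<omega> y * h y \<partial>lborel) \<partial>M)"
proof -
  have "(\<integral>\<^sup>+\<omega>. h (Y \<omega>) \<partial>M) = (\<integral>\<^sup>+y. h y \<partial>distr M lborel Y)"
    by (simp add: nn_integral_distr)
  also have "\<dots> = (\<integral>\<^sup>+y. (\<integral>\<^sup>+\<omega>. f \<omega> y \<partial>M) * h y \<partial>lborel)"
    by (simp add: distr_Y_eq_density nn_integral_density)
  also have "\<dots> = (\<integral>\<^sup>+y. (\<integral>\<^sup>+\<omega>. f \<omega> y * h y \<partial>M) \<partial>lborel)"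
    by (simp add: nn_integral_multc)
  also have "\<dots> = (\<integral>\<^sup>+\<omega>. (\<integral>\<^sup>+y. f \<omega> y * h y \<partial>lborel) \<partial>M)"
    by (rule pair_sigma_finite.Fubini'[OF pair_sigma_finite_lborel]) measurable
  finally show ?thesis .
qed

lemma AE_mixture_pos:
  assumes "\<And>\<omega> y. \<omega> \<in> space M \<Longrightarrow> y \<le> 0 \<Longrightarrow> f \<omega> y = 0"
  shows "AE \<omega> in M. Y \<omega> > 0"
proof -
  have "(\<integral>\<^sup>+\<omega>. indicator {..0} (Y \<omega>) \<partial>M)
      = (\<integral>\<^sup>+\<omega>. (\<integral>\<^sup>+y. f \<omega> y * (indicator {..0} y :: ennreal) \<partial>lborel) \<partial>M)"
    by (rule nn_integral_mixture) measurable
  also have "\<dots> = 0"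
    using assms by (intro nn_integral_zero' AE_I2 nn_integral_zero') (auto simp: indicator_def)
  finally have "AE \<omega> in M. indicator {..0} (Y \<omega>) = (0 :: ennreal)"
    by (subst (asm) nn_integral_0_iff_AE) auto
  then show ?thesis
    by eventually_elim (auto simp: indicator_def split: if_splits)
qed

end

section \<open>Log-symmetric random variables\<close>

context prob_space
begin

lemma nn_integral_symmetric:
  fixes h :: "real \<Rightarrow> ennreal"
  assumes [measurable]: "X \<in> borel_measurable M" "h \<in> borel_measurable borel"
    and symm: "distr M borel X = distr M borel (\<lambda>\<omega>. - X \<omega>)"
  shows "(\<integral>\<^sup>+\<omega>. h (X \<omega>) \<partial>M) = (\<integral>\<^sup>+\<omega>. h (- X \<omega>) \<partial>M)"
  using arg_cong[OF symm, of "\<lambda>N. \<integral>\<^sup>+x. h x \<partial>N"] by (simp add: nn_integral_distr)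

lemma expectation_exp_symmetric_gt_one:
  fixes X :: "'a \<Rightarrow> real"
  assumes [measurable]: "X \<in> borel_measurable M"
    and symm: "distr M borel X = distr M borel (\<lambda>\<omega>. - X \<omega>)"
    and int: "integrable M (\<lambda>\<omega>. exp (X \<omega>))"
    and nonzero: "\<not> (AE \<omega> in M. X \<omega> = 0)"
  shows "expectation (\<lambda>\<omega>. exp (X \<omega>)) > 1"
proof -
  have nn_eq: "(\<integral>\<^sup>+\<omega>. exp (X \<omega>) \<partial>M) = (\<integral>\<^sup>+\<omega>. exp (- X \<omega>) \<partial>M)"
    by (rule nn_integral_symmetric[OF _ _ symm]) auto
  have int_neg: "integrable M (\<lambda>\<omega>. exp (- X \<omega>))"
    using int by (intro integrableI_nonneg) (auto simp: nn_eq[symmetric] integrable_iff_bounded)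
  have E_eq: "expectation (\<lambda>\<omega>. exp (X \<omega>)) = expectation (\<lambda>\<omega>. exp (- X \<omega>))"
    using nn_eq nn_integral_eq_integral[OF int] nn_integral_eq_integral[OF int_neg] by simp
  have int_cosh: "integrable M (\<lambda>\<omega>. cosh (X \<omega>) - 1)"
    using int int_neg by (simp add: cosh_def)
  have "expectation (\<lambda>\<omega>. cosh (X \<omega>) - 1) \<noteq> 0"
  proof
    assume "expectation (\<lambda>\<omega>. cosh (X \<omega>) - 1) = 0"
    then have "AE \<omega> in M. cosh (X \<omega>) - 1 = 0"
      using integral_nonneg_eq_0_iff_AE[OF int_cosh] cosh_real_ge_1 by simp
    then have "AE \<omega> in M. X \<omega> = 0"
      by simp
    with nonzero show False ..
  qed
  moreover have "expectation (\<lambda>\<omega>. cosh (X \<omega>) - 1) \<ge> 0"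
    using cosh_real_ge_1 by (intro integral_nonneg_AE) simp
  moreover have "expectation (\<lambda>\<omega>. cosh (X \<omega>) - 1) = expectation (\<lambda>\<omega>. exp (X \<omega>)) - 1"
    using int int_neg E_eq prob_space by (simp add: cosh_def)
  ultimately show ?thesis
    by linarith
qed

lemma nn_integral_powr_log_symmetric:
  fixes \<eta> :: "'a \<Rightarrow> real"
  assumes [measurable]: "\<eta> \<in> borel_measurable M"
    and pos: "\<And>\<omega>. \<omega> \<in> space M \<Longrightarrow> \<eta> \<omega> > 0"
    and symm: "distr M borel (\<lambda>\<omega>. ln (\<eta> \<omega>) - c) = distr M borel (\<lambda>\<omega>. c - ln (\<eta> \<omega>))"
  shows "(\<integral>\<^sup>+\<omega>. \<eta> \<omega> powr t \<partial>M) = exp (2 * t * c) * (\<integral>\<^sup>+\<omega>. \<eta> \<omega> powr (- t) \<partial>M)"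
proof -
  have powr_eq: "\<eta> \<omega> powr s = exp (s * c) * exp (s * (ln (\<eta> \<omega>) - c))" if "\<omega> \<in> space M" for \<omega> s
    using pos[OF that] by (simp add: powr_def exp_add[symmetric] algebra_simps)
  have "(\<integral>\<^sup>+\<omega>. \<eta> \<omega> powr t \<partial>M) = (\<integral>\<^sup>+\<omega>. exp (t * c) * exp (t * (ln (\<eta> \<omega>) - c)) \<partial>M)"
    by (intro nn_integral_cong) (simp add: powr_eq)
  also have "\<dots> = (\<integral>\<^sup>+\<omega>. exp (t * c) * exp (t * - (ln (\<eta> \<omega>) - c)) \<partial>M)"
    using symm by (intro nn_integral_symmetric[where h = "\<lambda>x. exp (t * c) * exp (t * x)"]) auto
  also have "\<dots> = (\<integral>\<^sup>+\<omega>. exp (2 * t * c) * \<eta> \<omega> powr (- t) \<partial>M)"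
    by (intro nn_integral_cong) (simp add: powr_eq exp_add[symmetric] algebra_simps)
  finally show ?thesis
    by (simp add: ennreal_mult nn_integral_cmult)
qed

lemma expectation_inverse_log_symmetric_gt:
  fixes \<eta> :: "'a \<Rightarrow> real"
  assumes [measurable]: "\<eta> \<in> borel_measurable M"
    and pos: "\<And>\<omega>. \<omega> \<in> space M \<Longrightarrow> \<eta> \<omega> > 0"
    and symm: "distr M borel (\<lambda>\<omega>. ln (\<eta> \<omega>) - c) = distr M borel (\<lambda>\<omega>. c - ln (\<eta> \<omega>))"
    and int: "integrable M (\<lambda>\<omega>. 1 / \<eta> \<omega>)"
    and nonconst: "\<not> (AE \<omega> in M. \<eta> \<omega> = exp c)"
  shows "expectation (\<lambda>\<omega>. 1 / \<eta> \<omega>) > exp (- c)"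
proof -
  define X where "X = (\<lambda>\<omega>. c - ln (\<eta> \<omega>))"
  have inverse_eq: "1 / \<eta> \<omega> = exp (- c) * exp (X \<omega>)" if "\<omega> \<in> space M" for \<omega>
  proof -
    have "exp (X \<omega>) = exp c / \<eta> \<omega>"
      using pos[OF that] by (simp add: X_def exp_diff)
    then show ?thesis
      using pos[OF that] by (simp add: exp_minus field_simps)
  qed
  have "integrable M (\<lambda>\<omega>. exp c * (1 / \<eta> \<omega>))"
    using int by (rule integrable_mult_right)
  moreover have "integrable M (\<lambda>\<omega>. exp c * (1 / \<eta> \<omega>)) \<longleftrightarrow> integrable M (\<lambda>\<omega>. exp (X \<omega>))"
    by (intro Bochner_Integration.integrable_cong refl) (simp add: inverse_eq exp_minus)
  ultimately have int_exp: "integrable M (\<lambda>\<omega>. exp (X \<omega>))"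
    by simp
  have X_nonzero: "\<not> (AE \<omega> in M. X \<omega> = 0)"
  proof
    assume "AE \<omega> in M. X \<omega> = 0"
    then have "AE \<omega> in M. \<eta> \<omega> = exp c"
      using AE_space
    proof eventually_elim
      case (elim \<omega>)
      then show ?case
        using pos[of \<omega>] by (simp add: X_def)
    qed
    with nonconst show False ..
  qed
  have X_symm: "distr M borel X = distr M borel (\<lambda>\<omega>. - X \<omega>)"
    using symm by (simp add: X_def)
  have "X \<in> borel_measurable M"
    unfolding X_def by measurable
  then have E_gt: "expectation (\<lambda>\<omega>. exp (X \<omega>)) > 1"
    using X_symm int_exp X_nonzero by (rule expectation_exp_symmetric_gt_one)
  have E_eq: "expectation (\<lambda>\<omega>. 1 / \<eta> \<omega>) = exp (- c) * expectation (\<lambda>\<omega>. exp (X \<omega>))"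
    by (subst Bochner_Integration.integral_cong[OF refl inverse_eq]) simp_all
  have "exp (- c) * 1 < exp (- c) * expectation (\<lambda>\<omega>. exp (X \<omega>))"
    using E_gt by (intro mult_strict_left_mono) auto
  then show ?thesis
    unfolding E_eq by simp
qed

lemma nn_integral_powr_neg_finite:
  fixes \<eta> :: "'a \<Rightarrow> real"
  assumes [measurable]: "\<eta> \<in> borel_measurable M"
    and pos: "\<And>\<omega>. \<omega> \<in> space M \<Longrightarrow> \<eta> \<omega> > 0"
    and int: "integrable M (\<lambda>\<omega>. 1 / \<eta> \<omega>)"
    and t: "0 \<le> t" "t \<le> 1"
  shows "(\<integral>\<^sup>+\<omega>. \<eta> \<omega> powr (- t) \<partial>M) < \<infinity>"
proof -
  have "(\<integral>\<^sup>+\<omega>. \<eta> \<omega> powr (- t) \<partial>M) \<le> (\<integral>\<^sup>+\<omega>. ennreal (1 + 1 / \<eta> \<omega>) \<partial>M)"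
    using pos t by (intro nn_integral_mono ennreal_leI powr_neg_le_one_plus_inverse) simp_all
  also have "\<dots> = ennreal (expectation (\<lambda>\<omega>. 1 + 1 / \<eta> \<omega>))"
  proof (intro nn_integral_eq_integral AE_I2)
    show "integrable M (\<lambda>\<omega>. 1 + 1 / \<eta> \<omega>)"
      using int by (intro Bochner_Integration.integrable_add integrable_const)
    show "0 \<le> 1 + 1 / \<eta> \<omega>" if "\<omega> \<in> space M" for \<omega>
      using pos[OF that] by simp
  qed
  finally show ?thesis
    using ennreal_less_top le_less_trans unfolding infinity_ennreal_def by blast
qed

end

lemma integrable_ln_of_powr:
  fixes Y :: "'a \<Rightarrow> real"
  assumes [measurable]: "Y \<in> borel_measurable M"
    and pos: "AE \<omega> in M. Y \<omega> > 0" and e: "e > 0"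
    and int: "integrable M (\<lambda>\<omega>. Y \<omega> powr e)" "integrable M (\<lambda>\<omega>. Y \<omega> powr (- e))"
  shows "integrable M (\<lambda>\<omega>. ln (Y \<omega>))"
proof (rule Bochner_Integration.integrable_bound)
  show "integrable M (\<lambda>\<omega>. (Y \<omega> powr e + Y \<omega> powr (- e)) / e)"
    using int by simp
  show "AE \<omega> in M. norm (ln (Y \<omega>)) \<le> norm ((Y \<omega> powr e + Y \<omega> powr (- e)) / e)"
    using pos by eventually_elim (use abs_ln_le_powr e in simp)
qed measurable

lemma (in prob_space) exp_log_loss_gengamma:
  fixes Y :: "'a \<Rightarrow> real"
  assumes k: "k > 0" and \<gamma>: "\<gamma> > 0" and \<sigma>: "\<sigma> > 0"
    and [measurable]: "Y \<in> borel_measurable M" and pos: "AE \<omega> in M. Y \<omega> > 0"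
    and int_ln: "integrable M (\<lambda>\<omega>. ln (Y \<omega>))" and int_powr: "integrable M (\<lambda>\<omega>. Y \<omega> powr \<gamma>)"
  shows "integrable M (\<lambda>\<omega>. - ln (gengamma_density k \<gamma> \<sigma> (Y \<omega>)))"
    and "exp_log_loss M Y k \<gamma> \<sigma> = ln (Gamma (k / \<gamma>)) - ln \<gamma> - (k - 1) * (\<integral>\<omega>. ln (Y \<omega>) \<partial>M)
           + k * ln \<sigma> + (\<integral>\<omega>. Y \<omega> powr \<gamma> \<partial>M) / \<sigma> powr \<gamma>"
proof -
  define loss where "loss \<omega> = ln (Gamma (k / \<gamma>)) - ln \<gamma> + k * ln \<sigma> - (k - 1) * ln (Y \<omega>)
      + Y \<omega> powr \<gamma> / \<sigma> powr \<gamma>" for \<omega>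
  have AE_eq: "AE \<omega> in M. - ln (gengamma_density k \<gamma> \<sigma> (Y \<omega>)) = loss \<omega>"
    using pos by eventually_elim (simp add: loss_def neg_ln_gengamma_density[OF k \<gamma> \<sigma>])
  have int_loss: "integrable M loss"
    unfolding loss_def[abs_def] using int_ln int_powr by simp
  show "integrable M (\<lambda>\<omega>. - ln (gengamma_density k \<gamma> \<sigma> (Y \<omega>)))"
    using integrable_cong_AE[OF _ _ AE_eq] int_loss by simp
  have "exp_log_loss M Y k \<gamma> \<sigma> = expectation loss"
    unfolding exp_log_loss_def
    by (rule integral_cong_AE[OF _ borel_measurable_integrable[OF int_loss] AE_eq]) measurable
  also have "\<dots> = ln (Gamma (k / \<gamma>)) - ln \<gamma> - (k - 1) * (\<integral>\<omega>. ln (Y \<omega>) \<partial>M)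
      + k * ln \<sigma> + (\<integral>\<omega>. Y \<omega> powr \<gamma> \<partial>M) / \<sigma> powr \<gamma>"
    unfolding loss_def using int_ln int_powr prob_space by simp
  finally show "exp_log_loss M Y k \<gamma> \<sigma> = ln (Gamma (k / \<gamma>)) - ln \<gamma> - (k - 1) * (\<integral>\<omega>. ln (Y \<omega>) \<partial>M)
      + k * ln \<sigma> + (\<integral>\<omega>. Y \<omega> powr \<gamma> \<partial>M) / \<sigma> powr \<gamma>" .
qed

lemma log_scale_loss_minimizer_iff:
  fixes L :: "real \<Rightarrow> real" and k \<gamma> m C s :: real
  assumes k: "k > 0" and \<gamma>: "\<gamma> > 0" and m: "m > 0" and s: "s > 0"
    and L: "\<And>\<sigma>. \<sigma> > 0 \<Longrightarrow> L \<sigma> = C + k * ln \<sigma> + m / \<sigma> powr \<gamma>"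
  shows "(\<forall>\<sigma>>0. L s \<le> L \<sigma>) \<longleftrightarrow> s powr \<gamma> = \<gamma> * m / k"
proof -
  define q where "q = \<gamma> * m / k"
  have q: "q > 0"
    using k \<gamma> m by (simp add: q_def)
  have L_eq: "L \<sigma> = C + k / \<gamma> * (ln (\<sigma> powr \<gamma>) + q / \<sigma> powr \<gamma>)" if "\<sigma> > 0" for \<sigma>
    using that k \<gamma> by (simp add: L q_def ln_powr field_simps)
  have L_less: "C + k / \<gamma> * (ln q + 1) < L \<sigma>" if "\<sigma> > 0" "\<sigma> powr \<gamma> \<noteq> q" for \<sigma>
  proof -
    have "ln q + 1 < ln (\<sigma> powr \<gamma>) + q / \<sigma> powr \<gamma>"
      using ln_plus_divide_strict_min[OF q _ that(2)] that(1) by simp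
    then show ?thesis
      unfolding L_eq[OF that(1)] using k \<gamma> by (intro add_strict_left_mono mult_strict_left_mono) auto
  qed
  have L_opt: "L \<sigma> = C + k / \<gamma> * (ln q + 1)" if "\<sigma> > 0" "\<sigma> powr \<gamma> = q" for \<sigma>
    using that q by (simp add: L_eq)
  show ?thesis
    unfolding q_def[symmetric]
  proof
    assume min: "\<forall>\<sigma>>0. L s \<le> L \<sigma>"
    show "s powr \<gamma> = q"
    proof (rule ccontr)
      assume "s powr \<gamma> \<noteq> q"
      moreover have "(q powr (1 / \<gamma>)) powr \<gamma> = q"
        using q \<gamma> by (simp add: powr_powr)
      ultimately have "L (q powr (1 / \<gamma>)) < L s"
        using L_less[OF s] L_opt[of "q powr (1 / \<gamma>)"] q by simp
      moreover have "L s \<le> L (q powr (1 / \<gamma>))"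
        using min q by simp
      ultimately show False
        by simp
    qed
  next
    assume "s powr \<gamma> = q"
    then show "\<forall>\<sigma>>0. L s \<le> L \<sigma>"
      using L_opt[OF s] L_less L_opt by (metis order.order_iff_strict)
  qed
qed

lemma log_scale_loss_minimizer:
  fixes L :: "real \<Rightarrow> real" and k \<gamma> m C :: real
  assumes k: "k > 0" and \<gamma>: "\<gamma> > 0" and m: "m > 0"
    and L: "\<And>\<sigma>. \<sigma> > 0 \<Longrightarrow> L \<sigma> = C + k * ln \<sigma> + m / \<sigma> powr \<gamma>"
  shows "\<exists>!s. s > 0 \<and> (\<forall>\<sigma>>0. L s \<le> L \<sigma>)"
    and "s > 0 \<Longrightarrow> \<forall>\<sigma>>0. L s \<le> L \<sigma> \<Longrightarrow> s powr \<gamma> = \<gamma> * m / k"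
proof -
  note minimizer_iff = log_scale_loss_minimizer_iff[OF k \<gamma> m _ L]
  show "s > 0 \<Longrightarrow> \<forall>\<sigma>>0. L s \<le> L \<sigma> \<Longrightarrow> s powr \<gamma> = \<gamma> * m / k"
    using minimizer_iff by blast
  define s\<^sub>0 where "s\<^sub>0 = (\<gamma> * m / k) powr (1 / \<gamma>)"
  have s\<^sub>0: "s\<^sub>0 > 0" "s\<^sub>0 powr \<gamma> = \<gamma> * m / k"
    using k \<gamma> m by (simp_all add: s\<^sub>0_def powr_powr)
  show "\<exists>!s. s > 0 \<and> (\<forall>\<sigma>>0. L s \<le> L \<sigma>)"
  proof (rule ex1I[of _ s\<^sub>0])
    show "s\<^sub>0 > 0 \<and> (\<forall>\<sigma>>0. L s\<^sub>0 \<le> L \<sigma>)"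
      using minimizer_iff[OF s\<^sub>0(1)] s\<^sub>0 by simp
    fix s assume "s > 0 \<and> (\<forall>\<sigma>>0. L s \<le> L \<sigma>)"
    then have "s > 0" "s powr \<gamma> = s\<^sub>0 powr \<gamma>"
      using minimizer_iff[of s] s\<^sub>0(2) by simp_all
    then have "(s powr \<gamma>) powr (1 / \<gamma>) = (s\<^sub>0 powr \<gamma>) powr (1 / \<gamma>)"
      by simp
    then show "s = s\<^sub>0"
      using \<open>s > 0\<close> s\<^sub>0(1) \<gamma> by (simp add: powr_powr)
  qed
qed

lemma scale_of_nat_less_iff:
  assumes "\<gamma> > 0" "\<eta> > 0" "s > 0"
  shows "scale_of_nat \<gamma> \<eta> < s \<longleftrightarrow> 1 / \<eta> < s powr \<gamma>"
proof -
  have "scale_of_nat \<gamma> \<eta> powr \<gamma> = \<eta> powr (- 1 / \<gamma> * \<gamma>)"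
    by (simp only: scale_of_nat_def powr_powr)
  also have "\<dots> = 1 / \<eta>"
    using assms by (simp add: powr_minus_divide)
  finally have "scale_of_nat \<gamma> \<eta> powr \<gamma> = 1 / \<eta>" .
  moreover have "scale_of_nat \<gamma> \<eta> > 0"
    using assms by (simp add: scale_of_nat_def)
  ultimately show ?thesis
    using powr_less_mono2[of \<gamma> "scale_of_nat \<gamma> \<eta>" s] powr_less_cancel2[of \<gamma> "scale_of_nat \<gamma> \<eta>" s] assms
    by auto
qed

locale gengamma_mixture = prob_space M for M :: "'a measure" +
  fixes \<eta> Y :: "'a \<Rightarrow> real" and k \<gamma> :: real
  assumes k_pos: "k > 0" and gamma_pos: "\<gamma> > 0"
    and eta_measurable [measurable]: "\<eta> \<in> borel_measurable M"
    and Y_measurable [measurable]: "Y \<in> borel_measurable M"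
    and eta_pos: "\<omega> \<in> space M \<Longrightarrow> \<eta> \<omega> > 0"
    and gengamma_law_Y: "B \<in> sets borel \<Longrightarrow> prob (Y -` B \<inter> space M)
          = (\<integral>\<omega>. (LINT y:B|lborel. gengamma_density k \<gamma> (scale_of_nat \<gamma> (\<eta> \<omega>)) y) \<partial>M)"

sublocale gengamma_mixture \<subseteq> density_mixture M Y "\<lambda>\<omega>. gengamma_density k \<gamma> (scale_of_nat \<gamma> (\<eta> \<omega>))"
proof
  have "(\<lambda>x. gengamma_density k \<gamma> (scale_of_nat \<gamma> (\<eta> (fst x))) (snd x)) \<in> borel_measurable (M \<Otimes>\<^sub>M lborel)"
    unfolding scale_of_nat_def by measurable
  then show "(\<lambda>(\<omega>, y). gengamma_density k \<gamma> (scale_of_nat \<gamma> (\<eta> \<omega>)) y) \<in> borel_measurable (M \<Otimes>\<^sub>M lborel)"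
    by (simp add: case_prod_beta')
  fix \<omega> assume "\<omega> \<in> space M"
  then have "scale_of_nat \<gamma> (\<eta> \<omega>) > 0"
    using eta_pos[of \<omega>] by (simp add: scale_of_nat_def)
  then show "gengamma_density k \<gamma> (scale_of_nat \<gamma> (\<eta> \<omega>)) y \<ge> 0"
    and "(\<integral>\<^sup>+y. gengamma_density k \<gamma> (scale_of_nat \<gamma> (\<eta> \<omega>)) y \<partial>lborel) = 1" for y
    using k_pos gamma_pos by (simp_all add: gengamma_density_nonneg nn_integral_gengamma_density)
qed (use gengamma_law_Y in auto)

context gengamma_mixture
begin

lemma AE_Y_pos: "AE \<omega> in M. Y \<omega> > 0"
  by (rule AE_mixture_pos) simp

lemma nn_integral_Y_powr:
  assumes kp: "k + p > 0"
  shows "(\<integral>\<^sup>+\<omega>. Y \<omega> powr p \<partial>M)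
       = (\<integral>\<^sup>+\<omega>. \<eta> \<omega> powr (- p / \<gamma>) \<partial>M) * ennreal (Gamma ((k + p) / \<gamma>) / Gamma (k / \<gamma>))"
proof -
  have Gamma_ratio: "Gamma ((k + p) / \<gamma>) / Gamma (k / \<gamma>) \<ge> 0"
    using kp k_pos gamma_pos Gamma_real_pos[of "(k + p) / \<gamma>"] Gamma_real_pos[of "k / \<gamma>"] by simp
  have "(\<integral>\<^sup>+\<omega>. Y \<omega> powr p \<partial>M)
      = (\<integral>\<^sup>+\<omega>. (\<integral>\<^sup>+y. gengamma_density k \<gamma> (scale_of_nat \<gamma> (\<eta> \<omega>)) y * ennreal (y powr p) \<partial>lborel) \<partial>M)"
    by (rule nn_integral_mixture) measurable
  also have "\<dots> = (\<integral>\<^sup>+\<omega>. ennreal (\<eta> \<omega> powr (- p / \<gamma>) * (Gamma ((k + p) / \<gamma>) / Gamma (k / \<gamma>))) \<partial>M)"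
  proof (rule nn_integral_cong)
    fix \<omega> assume "\<omega> \<in> space M"
    then have \<sigma>: "scale_of_nat \<gamma> (\<eta> \<omega>) > 0" and "\<eta> \<omega> > 0"
      using eta_pos[of \<omega>] by (auto simp: scale_of_nat_def)
    then have "scale_of_nat \<gamma> (\<eta> \<omega>) powr p = \<eta> \<omega> powr (- p / \<gamma>)"
      by (simp add: scale_of_nat_def powr_powr)
    then show "(\<integral>\<^sup>+y. gengamma_density k \<gamma> (scale_of_nat \<gamma> (\<eta> \<omega>)) y * ennreal (y powr p) \<partial>lborel)
        = ennreal (\<eta> \<omega> powr (- p / \<gamma>) * (Gamma ((k + p) / \<gamma>) / Gamma (k / \<gamma>)))"
      by (simp add: nn_integral_gengamma_density_powr[OF k_pos gamma_pos \<sigma> kp])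
  qed
  also have "\<dots> = (\<integral>\<^sup>+\<omega>. \<eta> \<omega> powr (- p / \<gamma>) * ennreal (Gamma ((k + p) / \<gamma>) / Gamma (k / \<gamma>)) \<partial>M)"
    by (intro nn_integral_cong) (rule ennreal_mult''[OF Gamma_ratio])
  also have "\<dots> = (\<integral>\<^sup>+\<omega>. \<eta> \<omega> powr (- p / \<gamma>) \<partial>M) * ennreal (Gamma ((k + p) / \<gamma>) / Gamma (k / \<gamma>))"
    by (rule nn_integral_multc) measurable
  finally show ?thesis .
qed

lemma integrable_Y_powr:
  assumes "k + p > 0" and fin: "(\<integral>\<^sup>+\<omega>. \<eta> \<omega> powr (- p / \<gamma>) \<partial>M) < \<infinity>"
  shows "integrable M (\<lambda>\<omega>. Y \<omega> powr p)"
  using nn_integral_Y_powr[OF assms(1)] fin by (intro integrableI_nonneg) (auto simp: ennreal_mult_less_top)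

lemma expectation_Y_powr_gamma:
  assumes int: "integrable M (\<lambda>\<omega>. 1 / \<eta> \<omega>)"
  shows "integrable M (\<lambda>\<omega>. Y \<omega> powr \<gamma>)"
    and "expectation (\<lambda>\<omega>. Y \<omega> powr \<gamma>) = k / \<gamma> * expectation (\<lambda>\<omega>. 1 / \<eta> \<omega>)"
proof -
  have Gamma_ratio: "Gamma ((k + \<gamma>) / \<gamma>) / Gamma (k / \<gamma>) = k / \<gamma>"
  proof -
    have kg: "k / \<gamma> > 0"
      using k_pos gamma_pos by simp
    then have G: "Gamma (k / \<gamma>) \<noteq> 0"
      using Gamma_real_pos[OF kg] by linarith
    have "k / \<gamma> \<notin> \<int>\<^sub>\<le>\<^sub>0"
      using kg nonpos_Ints_nonpos[of "k / \<gamma>"] by fastforce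
    then show ?thesis
      using k_pos gamma_pos Gamma_plus1[of "k / \<gamma>"] G by (simp add: add_divide_distrib)
  qed
  have "(\<integral>\<^sup>+\<omega>. \<eta> \<omega> powr (- \<gamma> / \<gamma>) \<partial>M) = (\<integral>\<^sup>+\<omega>. 1 / \<eta> \<omega> \<partial>M)"
    using eta_pos[THEN less_imp_le] gamma_pos by (intro nn_integral_cong) (simp add: powr_minus_divide)
  also have "\<dots> = ennreal (expectation (\<lambda>\<omega>. 1 / \<eta> \<omega>))"
    using int eta_pos by (intro nn_integral_eq_integral AE_I2) (simp_all add: less_imp_le)
  finally have "(\<integral>\<^sup>+\<omega>. Y \<omega> powr \<gamma> \<partial>M) = ennreal (k / \<gamma> * expectation (\<lambda>\<omega>. 1 / \<eta> \<omega>))"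
    using nn_integral_Y_powr[of \<gamma>] k_pos gamma_pos Gamma_ratio
    by (simp add: ennreal_mult'[symmetric] mult.commute)
  moreover show int_powr: "integrable M (\<lambda>\<omega>. Y \<omega> powr \<gamma>)"
    using calculation by (intro integrableI_nonneg) simp_all
  ultimately have "ennreal (expectation (\<lambda>\<omega>. Y \<omega> powr \<gamma>))
      = ennreal (k / \<gamma> * expectation (\<lambda>\<omega>. 1 / \<eta> \<omega>))"
    using nn_integral_eq_integral[OF int_powr] by simp
  moreover have "0 \<le> k / \<gamma> * expectation (\<lambda>\<omega>. 1 / \<eta> \<omega>)"
    using k_pos gamma_pos eta_pos[THEN less_imp_le]
    by (intro mult_nonneg_nonneg integral_nonneg_AE AE_I2) simp_all
  ultimately show "expectation (\<lambda>\<omega>. Y \<omega> powr \<gamma>) = k / \<gamma> * expectation (\<lambda>\<omega>. 1 / \<eta> \<omega>)"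
    by (simp add: ennreal_inj integral_nonneg_AE)
qed

lemma integrable_ln_Y:
  assumes symm: "distr M borel (\<lambda>\<omega>. ln (\<eta> \<omega>) - c) = distr M borel (\<lambda>\<omega>. c - ln (\<eta> \<omega>))"
    and int: "integrable M (\<lambda>\<omega>. 1 / \<eta> \<omega>)"
  shows "integrable M (\<lambda>\<omega>. ln (Y \<omega>))"
proof -
  \<comment> \<open>\<open>t \<le> 1\<close> bounds \<open>\<eta> powr -t\<close> by \<open>1 + 1 / \<eta>\<close>; \<open>t * \<gamma> < k\<close> keeps \<open>Y powr (- t * \<gamma>)\<close> integrable.\<close>
  define t where "t = min 1 (k / (2 * \<gamma>))"
  have t: "0 < t" "t \<le> 1" "t * \<gamma> < k"
    using k_pos gamma_pos by (auto simp: t_def min_def field_simps)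
  have fin_neg: "(\<integral>\<^sup>+\<omega>. \<eta> \<omega> powr (- t) \<partial>M) < \<infinity>"
    using nn_integral_powr_neg_finite[OF eta_measurable eta_pos int] t by simp
  have fin_pos: "(\<integral>\<^sup>+\<omega>. \<eta> \<omega> powr t \<partial>M) < \<infinity>"
    using nn_integral_powr_log_symmetric[OF eta_measurable eta_pos symm, of t] fin_neg
    by (simp add: ennreal_mult_less_top)
  show ?thesis
  proof (rule integrable_ln_of_powr[OF Y_measurable AE_Y_pos])
    show "t * \<gamma> > 0"
      using t gamma_pos by simp
    show "integrable M (\<lambda>\<omega>. Y \<omega> powr (t * \<gamma>))"
      using fin_neg t k_pos gamma_pos by (intro integrable_Y_powr) (simp_all add: add_pos_pos)
    show "integrable M (\<lambda>\<omega>. Y \<omega> powr (- (t * \<gamma>)))"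
      using fin_pos t gamma_pos by (intro integrable_Y_powr) simp_all
  qed
qed

lemma exp_log_loss_eq:
  assumes symm: "distr M borel (\<lambda>\<omega>. ln (\<eta> \<omega>) - c) = distr M borel (\<lambda>\<omega>. c - ln (\<eta> \<omega>))"
    and int: "integrable M (\<lambda>\<omega>. 1 / \<eta> \<omega>)" and \<sigma>: "\<sigma> > 0"
  shows "integrable M (\<lambda>\<omega>. - ln (gengamma_density k \<gamma> \<sigma> (Y \<omega>)))"
    and "exp_log_loss M Y k \<gamma> \<sigma> = ln (Gamma (k / \<gamma>)) - ln \<gamma> - (k - 1) * expectation (\<lambda>\<omega>. ln (Y \<omega>))
           + k * ln \<sigma> + k / \<gamma> * expectation (\<lambda>\<omega>. 1 / \<eta> \<omega>) / \<sigma> powr \<gamma>"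
  using exp_log_loss_gengamma[OF k_pos gamma_pos \<sigma> Y_measurable AE_Y_pos integrable_ln_Y[OF symm int]
      expectation_Y_powr_gamma(1)[OF int]]
  by (simp_all add: expectation_Y_powr_gamma(2)[OF int])

end


lemma gengamma_mixtureI:
  fixes M :: "'a measure" and \<eta> Y :: "'a \<Rightarrow> real"
  assumes "prob_space M" "k > 0" "\<gamma> > 0" "\<eta> \<in> borel_measurable M" "Y \<in> borel_measurable M"
    and "\<forall>\<omega>\<in>space M. \<eta> \<omega> > 0"
    and joint_law: "\<forall>A\<in>sets borel. \<forall>B\<in>sets borel.
        measure M {\<omega>\<in>space M. \<eta> \<omega> \<in> A \<and> Y \<omega> \<in> B}
        = (\<integral>\<omega>. indicator A (\<eta> \<omega>) *
              (LINT y:B|lborel. gengamma_density k \<gamma> (scale_of_nat \<gamma> (\<eta> \<omega>)) y) \<partial>M)"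
  shows "gengamma_mixture M \<eta> Y k \<gamma>"
proof -
  have "measure M (Y -` B \<inter> space M)
      = (\<integral>\<omega>. (LINT y:B|lborel. gengamma_density k \<gamma> (scale_of_nat \<gamma> (\<eta> \<omega>)) y) \<partial>M)"
    if "B \<in> sets borel" for B
  proof -
    have "Y -` B \<inter> space M = {\<omega>\<in>space M. \<eta> \<omega> \<in> UNIV \<and> Y \<omega> \<in> B}"
      by auto
    then show ?thesis
      using joint_law[rule_format, of UNIV B] that by simp
  qed
  then show ?thesis
    using assms by (intro gengamma_mixture.intro gengamma_mixture_axioms.intro) auto
qed

theorem mainTheorem11:
  fixes M :: "'a measure" and eta_test Y :: "'a \<Rightarrow> real"
    and k \<gamma> eta_train :: real
  assumes "prob_space M"
    and k_pos: "k > 0" and gamma_pos: "\<gamma> > 0"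
    and train_pos: "eta_train > 0"
    and eta_meas: "eta_test \<in> borel_measurable M"
    and Y_meas: "Y \<in> borel_measurable M"
    and eta_pos: "\<forall>\<omega>\<in>space M. eta_test \<omega> > 0"
    and nonconst: "\<not> (\<exists>c. AE \<omega> in M. eta_test \<omega> = c)"
    and symm: "distr M borel (\<lambda>\<omega>. ln (eta_test \<omega>) - ln eta_train)
             = distr M borel (\<lambda>\<omega>. ln eta_train - ln (eta_test \<omega>))"
    and inv_int: "integrable M (\<lambda>\<omega>. 1 / eta_test \<omega>)"
    and cond_density: "\<forall>A\<in>sets borel. \<forall>B\<in>sets borel.
        measure M {\<omega>\<in>space M. eta_test \<omega> \<in> A \<and> Y \<omega> \<in> B}
        = (\<integral>\<omega>. indicator A (eta_test \<omega>) *
              (LINT y:B|lborel. gengamma_density k \<gamma> (scale_of_nat \<gamma> (eta_test \<omega>)) y) \<partial>M)"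
  shows "(\<forall>\<sigma>>0. integrable M (\<lambda>\<omega>. - ln (gengamma_density k \<gamma> \<sigma> (Y \<omega>))))
       \<and> (\<exists>!s. s > 0 \<and> (\<forall>\<sigma>>0. exp_log_loss M Y k \<gamma> s \<le> exp_log_loss M Y k \<gamma> \<sigma>))
       \<and> (\<forall>s. s > 0 \<and> (\<forall>\<sigma>>0. exp_log_loss M Y k \<gamma> s \<le> exp_log_loss M Y k \<gamma> \<sigma>) \<longrightarrow>
             s powr \<gamma> = (\<integral>\<omega>. 1 / eta_test \<omega> \<partial>M)
             \<and> s > scale_of_nat \<gamma> eta_train)"
proof -
  interpret gengamma_mixture M eta_test Y k \<gamma>
    using gengamma_mixtureI assms by blast
  define Q where "Q = expectation (\<lambda>\<omega>. 1 / eta_test \<omega>)"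
  have "\<not> (AE \<omega> in M. eta_test \<omega> = exp (ln eta_train))"
    using nonconst by blast
  then have Q_gt: "1 / eta_train < Q"
    using expectation_inverse_log_symmetric_gt[OF eta_meas _ symm inv_int] eta_pos train_pos
    by (simp add: Q_def exp_minus inverse_eq_divide)
  then have "k / \<gamma> * Q > 0"
    using train_pos k_pos gamma_pos by (smt (verit) divide_pos_pos mult_pos_pos)
  note minimizer = log_scale_loss_minimizer[OF k_pos gamma_pos this
      exp_log_loss_eq(2)[OF symm inv_int, folded Q_def]]
  have "\<gamma> * (k / \<gamma> * Q) / k = Q"
    using k_pos gamma_pos by simp
  then show ?thesis
    using exp_log_loss_eq(1)[OF symm inv_int] minimizer scale_of_nat_less_iff[OF gamma_pos train_pos] Q_gt
    by (auto simp: Q_def)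
qed

end
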